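(* Let $g,h:[0,1]\to\mathbb{R}$ be piecewise continuous and strictly monotonic and regular. Let $F_g,F_h$ be the distribution functions of $g(U_0),h(U_0)$ for $U_0\sim\mathcal{U}(0,1)$. Then the uniform-distribution-preserving transformations $T_g=F_g\circ g$ and $T_h=F_h\circ h$ are regular.
   Context: $\psi$ is piecewise continuous and strictly monotonic if there is a finite partition $0=u_0<\dots<u_M=1$ with $\psi$ continuous and strictly monotonic on each $(u_{m-1},u_m)$. $\psi$ is regular if it is continuous on $[0,1]$, continuously differentiable on $(0,1)$, its derivative is bounded on $(0,1)$, and $\psi'(u)=0$ iff $u$ is a turning point (interior local extremum) of $\psi$. A map $T:[0,1]\to[0,1]$ is uniform-distribution-preserving (udp) if $T(U)\sim\mathcal{U}(0,1)$ for $U\sim\mathcal{U}(0,1)$; a udp transformation is regular if there is a finite partition $0=a_0<\dots<a_L=1$ such that $T$ is continuously differentiable on each $(a_{\ell-1},a_\ell)$. *)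

theory Defs
  imports "HOL-Probability.Probability"
begin

definition unif01 :: "real measure" where
  "unif01 = restrict_space lborel {0..1}"

definition pw_cont_strict_mono :: "(real \<Rightarrow> real) \<Rightarrow> bool" where
  "pw_cont_strict_mono \<psi> \<longleftrightarrow>
     (\<exists>(u::nat \<Rightarrow> real) M. u 0 = 0 \<and> u M = 1 \<and> (\<forall>m<M. u m < u (Suc m)) \<and>
        (\<forall>m\<in>{1..M}. continuous_on {u (m-1)<..<u m} \<psi> \<and>
            ((\<forall>x\<in>{u (m-1)<..<u m}. \<forall>y\<in>{u (m-1)<..<u m}. x < y \<longrightarrow> \<psi> x < \<psi> y) \<or>
             (\<forall>x\<in>{u (m-1)<..<u m}. \<forall>y\<in>{u (m-1)<..<u m}. x < y \<longrightarrow> \<psi> y < \<psi> x))))"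

definition turning_point :: "(real \<Rightarrow> real) \<Rightarrow> real \<Rightarrow> bool" where
  "turning_point \<psi> u \<longleftrightarrow> u \<in> {0<..<1} \<and>
     (\<exists>e>0. (\<forall>v. \<bar>v - u\<bar> < e \<longrightarrow> \<psi> v \<le> \<psi> u) \<or> (\<forall>v. \<bar>v - u\<bar> < e \<longrightarrow> \<psi> u \<le> \<psi> v))"

definition regular_fun :: "(real \<Rightarrow> real) \<Rightarrow> bool" where
  "regular_fun \<psi> \<longleftrightarrow> continuous_on {0..1} \<psi> \<and>
     (\<exists>\<psi>'. (\<forall>u\<in>{0<..<1}. (\<psi> has_real_derivative \<psi>' u) (at u)) \<and>
           continuous_on {0<..<1} \<psi>' \<and> bounded (\<psi>' ` {0<..<1}) \<and>
           (\<forall>u\<in>{0<..<1}. \<psi>' u = 0 \<longleftrightarrow> turning_point \<psi> u))"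

definition distfun :: "(real \<Rightarrow> real) \<Rightarrow> real \<Rightarrow> real" where
  "distfun g x = measure unif01 {u \<in> space unif01. g u \<le> x}"

definition udp :: "(real \<Rightarrow> real) \<Rightarrow> bool" where
  "udp T \<longleftrightarrow> T \<in> measurable unif01 unif01 \<and> distr unif01 unif01 T = unif01"

definition regular_udp :: "(real \<Rightarrow> real) \<Rightarrow> bool" where
  "regular_udp T \<longleftrightarrow> udp T \<and>
     (\<exists>(a::nat \<Rightarrow> real) L. a 0 = 0 \<and> a L = 1 \<and> (\<forall>l<L. a l < a (Suc l)) \<and>
        (\<forall>l\<in>{1..L}. \<exists>T'. (\<forall>u\<in>{a (l-1)<..<a l}. (T has_real_derivative T' u) (at u)) \<and>
                          continuous_on {a (l-1)<..<a l} T'))"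

end

theory Submission
  imports Defs
begin

(* Let F be the distribution function of g(U). As g is continuous with finite level sets, F is
   continuous, and then T = F o g is uniform by the probability integral transform:
   F (g u) <= x holds iff g u <= y for the largest y with F y = x.

   On each cell of the monotonicity partition, g has no turning point, so g' does not vanish there
   and g is a C^1 bijection onto an open interval. The mass that the cell contributes to F is
   therefore, up to sign and an additive constant, the inverse of g there, which is C^1 with
   derivative 1/g' off the values of g at the two ends of the cell. Summing over cells, F is C^1
   off the finite set V of values of g at the partition points, so by the chain rule T is C^1 off
   the finite set of preimages of V, which supplies the partition required by regular_udp. *)

section \<open>The probability integral transform\<close>

lemma space_unif01 [simp]: "space unif01 = {0..1}"
  unfolding unif01_def by (simp add: space_restrict_space)

lemma prob_space_unif01: "prob_space unif01"
proof
  have "emeasure unif01 {0..1} = emeasure lborel {0..1::real}"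
    unfolding unif01_def by (rule emeasure_restrict_space) auto
  then show "emeasure unif01 (space unif01) = 1" by simp
qed

lemma measure_unif01: "A \<subseteq> {0..1} \<Longrightarrow> measure unif01 A = measure lborel A"
  unfolding unif01_def by (rule measure_restrict_space) auto

lemma borel_measurable_unif01_continuous:
  "continuous_on {0..1} g \<Longrightarrow> (g :: real \<Rightarrow> real) \<in> borel_measurable unif01"
  unfolding unif01_def
  by (metis borel_measurable_continuous_on_restrict sets_lborel sets_restrict_space_cong measurable_cong_sets)

lemma (in prob_space) cdf_distr:
  assumes "random_variable borel X"
  shows "cdf (distr M borel X) x = prob {\<omega> \<in> space M. X \<omega> \<le> x}"
proof -
  have "cdf (distr M borel X) x = prob (X -` {..x} \<inter> space M)"
    unfolding cdf_def using assms by (rule measure_distr) simp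
  also have "X -` {..x} \<inter> space M = {\<omega> \<in> space M. X \<omega> \<le> x}" by blast
  finally show ?thesis .
qed

lemma distfun_eq_cdf:
  "g \<in> borel_measurable unif01 \<Longrightarrow> distfun g = cdf (distr unif01 borel g)"
  using prob_space.cdf_distr[OF prob_space_unif01] by (simp add: distfun_def fun_eq_iff)

lemma continuous_mono_greatest_preimage:
  fixes F :: "real \<Rightarrow> real"
  assumes cont: "\<And>y. isCont F y" and "mono F" and a: "F a \<le> x" and b: "x < F b"
  obtains y where "F y = x" "\<And>z. F z \<le> x \<Longrightarrow> z \<le> y"
proof -
  define S where "S = {z. F z \<le> x}"
  have S_le_b: "z \<le> b" if "z \<in> S" for z
  proof (rule ccontr)
    assume "\<not> z \<le> b"
    then have "F b \<le> F z" using \<open>mono F\<close> by (simp add: monoD)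
    then show False using that b by (simp add: S_def)
  qed
  then have bdd: "bdd_above S" by (rule bdd_aboveI)
  have "closed S"
    unfolding S_def using cont by (intro closed_Collect_le continuous_intros continuous_at_imp_continuous_on) auto
  moreover have "a \<in> S" using a by (simp add: S_def)
  ultimately have y: "Sup S \<in> S" using bdd by (intro closed_contains_Sup) auto
  then have "\<exists>z\<ge>Sup S. z \<le> b \<and> F z = x"
    using b S_le_b cont by (intro IVT) (auto simp: S_def)
  then obtain z where "Sup S \<le> z" "F z = x" by blast
  moreover have "z \<le> Sup S" using \<open>F z = x\<close> bdd by (intro cSup_upper) (simp_all add: S_def)
  ultimately have "F (Sup S) = x" by simp
  moreover have "z \<le> Sup S" if "F z \<le> x" for z using that bdd by (intro cSup_upper) (simp_all add: S_def)
  ultimately show thesis by (rule that)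
qed

lemma (in prob_space) prob_cdf_comp_le:
  assumes Y: "random_variable borel Y"
    and atomless: "\<And>y. isCont (cdf (distr M borel Y)) y"
    and x: "0 < x" "x < 1"
  shows "prob {\<omega> \<in> space M. cdf (distr M borel Y) (Y \<omega>) \<le> x} = x"
proof -
  define F where "F = cdf (distr M borel Y)"
  interpret D: real_distribution "distr M borel Y" using Y by simp
  have mono: "mono F" unfolding F_def by (intro monoI D.cdf_nondecreasing)
  obtain a where "F a < x"
    using order_tendstoD(2)[OF D.cdf_lim_at_bot x(1)] unfolding F_def
    by (metis eventually_at_bot_linorder order_refl)
  moreover obtain b where "x < F b"
    using order_tendstoD(1)[OF D.cdf_lim_at_top_prob x(2)] unfolding F_def
    by (metis eventually_at_top_linorder order_refl)
  ultimately obtain y where y: "F y = x" "\<And>z. F z \<le> x \<Longrightarrow> z \<le> y"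
    using continuous_mono_greatest_preimage[OF atomless[folded F_def] mono] by (metis less_imp_le)
  have "{\<omega> \<in> space M. F (Y \<omega>) \<le> x} = {\<omega> \<in> space M. Y \<omega> \<le> y}"
    using y monoD[OF mono] by fastforce
  also have "prob \<dots> = F y" unfolding F_def using Y by (rule cdf_distr[symmetric])
  finally show ?thesis using y by (simp add: F_def)
qed

lemma udpI_distr:
  assumes T: "T \<in> borel_measurable unif01" and range: "\<And>v. v \<in> {0..1} \<Longrightarrow> T v \<in> {0..1}"
    and distr_eq: "distr unif01 borel T = distr unif01 borel (\<lambda>v. v)"
  shows "udp T"
proof -
  have T_unif01: "T \<in> measurable unif01 unif01"
    unfolding unif01_def
  proof (rule measurable_restrict_space2)
    show "T \<in> space (restrict_space lborel {0..1}) \<rightarrow> {0..1}"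
      using range by (simp add: space_restrict_space)
    show "T \<in> measurable (restrict_space lborel {0..1}) lborel"
      using T unfolding unif01_def by simp
  qed
  have "distr unif01 unif01 T = unif01"
  proof (rule measure_eqI)
    fix A assume "A \<in> sets (distr unif01 unif01 T)"
    then have A: "A \<in> sets unif01" "A \<in> sets borel" "A \<subseteq> {0..1}"
      unfolding unif01_def by (auto simp: sets_restrict_space_iff)
    have "emeasure (distr unif01 unif01 T) A = emeasure (distr unif01 borel T) A"
      using T_unif01 T A by (simp add: emeasure_distr)
    also have "\<dots> = emeasure (distr unif01 borel (\<lambda>v. v)) A" by (simp add: distr_eq)
    also have "\<dots> = emeasure unif01 ((\<lambda>v. v) -` A \<inter> space unif01)"
      using borel_measurable_unif01_continuous[OF continuous_on_id] A(2) by (rule emeasure_distr)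
    also have "(\<lambda>v. v) -` A \<inter> space unif01 = A" using A(3) by auto
    finally show "emeasure (distr unif01 unif01 T) A = emeasure unif01 A" .
  qed simp
  then show ?thesis using T_unif01 by (simp add: udp_def)
qed

lemma udpI_cdf:
  assumes T: "T \<in> borel_measurable unif01" and range: "\<And>v. v \<in> {0..1} \<Longrightarrow> T v \<in> {0..1}"
    and cdf: "\<And>x. x \<in> {0<..<1} \<Longrightarrow> measure unif01 {v \<in> {0..1}. T v \<le> x} = x"
  shows "udp T"
proof -
  interpret prob_space unif01 by (rule prob_space_unif01)
  have id: "(\<lambda>v. v) \<in> borel_measurable unif01"
    by (rule borel_measurable_unif01_continuous[OF continuous_on_id])
  have T_sets: "{v \<in> {0..1}. T v \<le> x} \<in> sets unif01" for x
  proof -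
    have "{v \<in> space unif01. T v \<le> x} \<in> sets unif01" using T by measurable
    then show ?thesis by simp
  qed
  have T0: "measure unif01 {v \<in> {0..1}. T v \<le> 0} = 0"
  proof (rule antisym)
    show "measure unif01 {v \<in> {0..1}. T v \<le> 0} \<le> 0"
    proof (rule dense_ge_bounded[of 0 1])
      fix e :: real assume e: "0 < e" "e < 1"
      have "measure unif01 {v \<in> {0..1}. T v \<le> 0} \<le> measure unif01 {v \<in> {0..1}. T v \<le> e}"
        using T_sets e by (intro finite_measure_mono) auto
      then show "measure unif01 {v \<in> {0..1}. T v \<le> 0} \<le> e" using cdf[of e] e by simp
    qed simp
  qed simp
  have "cdf (distr unif01 borel T) x = cdf (distr unif01 borel (\<lambda>v. v)) x" for x
  proof -
    consider "x < 0" | "x = 0" | "x \<in> {0<..<1}" | "1 \<le> x" by fastforce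
    then have "measure unif01 {v \<in> {0..1}. T v \<le> x} = measure unif01 {v \<in> {0..1::real}. v \<le> x}"
    proof cases
      case 1
      then have "{v \<in> {0..1}. T v \<le> x} = {}" "{v \<in> {0..1::real}. v \<le> x} = {}"
        using range by force+
      then show ?thesis by (simp only:)
    next
      case 2
      have "{v \<in> {0..1::real}. v \<le> 0} = {0}" by auto
      then show ?thesis using 2 T0 measure_unif01[of "{0}"] by simp
    next
      case 3
      then have "{v \<in> {0..1::real}. v \<le> x} = {0..x}" by auto
      then show ?thesis using 3 cdf measure_unif01[of "{0..x}"] by simp
    next
      case 4
      then have "{v \<in> {0..1}. T v \<le> x} = {0..1}" "{v \<in> {0..1::real}. v \<le> x} = {0..1}"
        using range by force+
      then show ?thesis by (simp only:)
    qed
    then show ?thesis using T id by (simp add: cdf_distr)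
  qed
  then have "distr unif01 borel T = distr unif01 borel (\<lambda>v. v)"
    using T id by (intro cdf_unique) auto
  then show ?thesis using udpI_distr[OF T range] by simp
qed

lemma udp_distfun_comp:
  assumes g: "g \<in> borel_measurable unif01"
    and atomless: "\<And>y. measure unif01 {v \<in> {0..1}. g v = y} = 0"
  shows "udp (distfun g \<circ> g)"
proof -
  interpret prob_space unif01 by (rule prob_space_unif01)
  interpret D: real_distribution "distr unif01 borel g" using g by simp
  have F: "distfun g = cdf (distr unif01 borel g)" using g by (rule distfun_eq_cdf)
  have cont: "isCont (distfun g) y" for y
  proof -
    have "measure (distr unif01 borel g) {y} = measure unif01 (g -` {y} \<inter> space unif01)"
      using g by (rule measure_distr) simp
    also have "g -` {y} \<inter> space unif01 = {v \<in> {0..1}. g v = y}" by auto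
    finally show ?thesis unfolding F D.isCont_cdf using atomless by simp
  qed
  show ?thesis
  proof (rule udpI_cdf)
    have "distfun g \<in> borel_measurable borel"
      unfolding F by (intro borel_measurable_mono monoI D.cdf_nondecreasing)
    then show "distfun g \<circ> g \<in> borel_measurable unif01" using g by (rule measurable_comp[rotated])
    show "(distfun g \<circ> g) v \<in> {0..1}" for v
      unfolding F using D.cdf_nonneg D.cdf_bounded_prob by simp
    show "measure unif01 {v \<in> {0..1}. (distfun g \<circ> g) v \<le> x} = x" if "x \<in> {0<..<1}" for x
      using prob_cdf_comp_le[OF _ cont[unfolded F], of x] g that by (simp add: F)
  qed
qed

section \<open>Partitions of the unit interval\<close>

definition partition01 :: "(nat \<Rightarrow> real) \<Rightarrow> nat \<Rightarrow> bool" where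
  "partition01 u M \<longleftrightarrow> u 0 = 0 \<and> u M = 1 \<and> (\<forall>m<M. u m < u (Suc m))"

lemma partition01_less:
  assumes u: "partition01 u M" and "i < j" "j \<le> M"
  shows "u i < u j"
  using assms(2,3)
proof (induction j)
  case (Suc j)
  have "u j < u (Suc j)" using u Suc.prems by (simp add: partition01_def)
  then show ?case using Suc by (cases "i = j") auto
qed simp

lemma partition01_le: "partition01 u M \<Longrightarrow> i \<le> j \<Longrightarrow> j \<le> M \<Longrightarrow> u i \<le> u j"
  using partition01_less[of u M i j] by (cases "i = j") auto

lemma partition01_cell_bounds:
  assumes u: "partition01 u M" and m: "m \<in> {1..M}"
  shows "0 \<le> u (m - 1)" "u (m - 1) < u m" "u m \<le> 1"
  using partition01_le[OF u, of 0 "m - 1"] partition01_less[OF u, of "m - 1" m]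
    partition01_le[OF u, of m M] u m
  by (auto simp: partition01_def)

lemma partition01_cover:
  assumes u: "partition01 u M" and v: "v \<in> {0..1}"
  shows "v \<in> u ` {0..M} \<or> (\<exists>m\<in>{1..M}. v \<in> {u (m - 1)<..<u m})"
proof (cases "v \<in> u ` {0..M}")
  case node: False
  define m where "m = (LEAST m. v < u m)"
  have "v < u M" using u v node by (force simp: partition01_def)
  then have "v < u m" "m \<le> M" unfolding m_def by (auto intro: LeastI Least_le)
  moreover have "m \<noteq> 0" using \<open>v < u m\<close> u v by (cases m) (auto simp: partition01_def)
  moreover have "\<not> v < u (m - 1)"
    using not_less_Least[of "m - 1" "\<lambda>k. v < u k"] \<open>m \<noteq> 0\<close> unfolding m_def by simp
  moreover have "v \<noteq> u (m - 1)" using node \<open>m \<le> M\<close> by auto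
  ultimately show ?thesis by auto
qed simp

lemma partition01_disjoint_cells:
  assumes u: "partition01 u M"
  shows "disjoint_family_on (\<lambda>m. {u (m - 1)<..<u m}) {1..M}"
proof -
  have "{u (m - 1)<..<u m} \<inter> {u (n - 1)<..<u n} = {}" if "m \<in> {1..M}" "n \<in> {1..M}" "m < n" for m n
  proof -
    have "u m \<le> u (n - 1)" using partition01_le[OF u, of m "n - 1"] that by auto
    then show ?thesis by (simp add: min_le_iff_disj le_max_iff_disj)
  qed
  then show ?thesis unfolding disjoint_family_on_def by (metis Int_commute linorder_neqE_nat)
qed

lemma measure_partition01:
  assumes u: "partition01 u M" and S: "S \<in> sets lborel" "S \<subseteq> {0..1}"
  shows "measure lborel S = (\<Sum>m\<in>{1..M}. measure lborel (S \<inter> {u (m - 1)<..<u m}))"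
proof -
  let ?A = "\<lambda>m. S \<inter> {u (m - 1)<..<u m}"
  have "S = (\<Union>m\<in>{1..M}. ?A m) \<union> (S \<inter> u ` {0..M})"
    using partition01_cover[OF u] S(2) by blast
  then have "measure lborel S = measure lborel ((\<Union>m\<in>{1..M}. ?A m) \<union> (S \<inter> u ` {0..M}))"
    by (rule arg_cong)
  also have "\<dots> = measure lborel (\<Union>m\<in>{1..M}. ?A m)"
    using S(1) by (intro measure_Un_null_set finite_imp_null_set_lborel) auto
  also have "\<dots> = (\<Sum>m\<in>{1..M}. measure lborel (?A m))"
  proof (rule measure_finite_Union)
    show "disjoint_family_on ?A {1..M}"
      using partition01_disjoint_cells[OF u] unfolding disjoint_family_on_def by blast
    show "emeasure lborel (?A m) \<noteq> \<infinity>" for m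
      using emeasure_bounded_finite[of "?A m"] by (simp add: bounded_Int)
  qed (use S(1) in auto)
  finally show ?thesis .
qed

lemma partition01_sorted_list:
  assumes sorted: "sorted_wrt (<) xs" and set: "set xs \<subseteq> {0..1}" "0 \<in> set xs" "1 \<in> set xs"
  shows "partition01 (\<lambda>i. xs ! i) (length xs - 1)"
proof -
  note le = sorted_nth_mono[OF strict_sorted_imp_sorted[OF sorted]]
  have range: "xs ! i \<in> {0..1}" if "i < length xs" for i using set(1) nth_mem[OF that] by blast
  obtain k0 where k0: "k0 < length xs" "xs ! k0 = 0" using set(2) by (metis in_set_conv_nth)
  then have "0 < length xs" by linarith
  then have first: "xs ! 0 = 0" using le[of 0 k0] range[of 0] k0 by auto
  obtain k1 where k1: "k1 < length xs" "xs ! k1 = 1" using set(3) by (metis in_set_conv_nth)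
  then have "k1 \<le> length xs - 1" "length xs - 1 < length xs" by arith+
  then have last: "xs ! (length xs - 1) = 1" using le[of k1 "length xs - 1"] range[of "length xs - 1"] k1 by auto
  have step: "xs ! m < xs ! Suc m" if "m < length xs - 1" for m
    using sorted_wrt_nth_less[OF sorted] that by simp
  show ?thesis using first last step by (simp add: partition01_def)
qed

lemma strict_sorted_nth_gap:
  fixes xs :: "'a :: linorder list"
  assumes sorted: "sorted_wrt (<) xs" and m: "0 < m" "m < length xs"
  shows "{xs ! (m - 1)<..<xs ! m} \<inter> set xs = {}"
proof -
  note le = sorted_nth_mono[OF strict_sorted_imp_sorted[OF sorted]]
  have False if "k < length xs" "xs ! (m - 1) < xs ! k" "xs ! k < xs ! m" for k
  proof (cases "k < m")
    case True
    then have "k \<le> m - 1" "m - 1 < length xs" using m by arith+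
    then show False using le[of k "m - 1"] that by simp
  next
    case False
    then show False using le[of m k] that by simp
  qed
  then show ?thesis by (auto simp: in_set_conv_nth)
qed

lemma partition01_avoiding:
  assumes "finite B"
  obtains u M where "partition01 u M" "\<And>m. m \<in> {1..M} \<Longrightarrow> {u (m - 1)<..<u m} \<inter> B = {}"
proof -
  define xs where "xs = sorted_list_of_set (insert 0 (insert 1 (B \<inter> {0..1})))"
  have sorted: "sorted_wrt (<) xs" by (simp add: xs_def)
  have set: "set xs = insert 0 (insert 1 (B \<inter> {0..1}))"
    unfolding xs_def using assms by (intro set_sorted_list_of_set) simp
  then have u: "partition01 (\<lambda>i. xs ! i) (length xs - 1)"
    using sorted by (intro partition01_sorted_list) auto
  moreover have "{xs ! (m - 1)<..<xs ! m} \<inter> B = {}" if m: "m \<in> {1..length xs - 1}" for m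
  proof -
    have "{xs ! (m - 1)<..<xs ! m} \<inter> B \<subseteq> {xs ! (m - 1)<..<xs ! m} \<inter> set xs"
      using partition01_cell_bounds[OF u m] set by auto
    also have "\<dots> = {}" using m by (intro strict_sorted_nth_gap[OF sorted]) arith+
    finally show ?thesis by blast
  qed
  ultimately show thesis by (rule that)
qed

section \<open>Strictly monotone pieces\<close>

lemma strict_mono_on_not_turning_point:
  assumes mono: "strict_mono_on {p<..<q} g \<or> strict_antimono_on {p<..<q} g" and v: "v \<in> {p<..<q}"
  shows "\<not> turning_point g v"
proof
  assume "turning_point g v"
  then obtain e where "e > 0"
    and extremum: "(\<forall>w. \<bar>w - v\<bar> < e \<longrightarrow> g w \<le> g v) \<or> (\<forall>w. \<bar>w - v\<bar> < e \<longrightarrow> g v \<le> g w)"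
    unfolding turning_point_def by blast
  define d where "d = min e (min (v - p) (q - v)) / 2"
  have "0 < d" "d < e" "d < v - p" "d < q - v" using \<open>e > 0\<close> v by (auto simp: d_def)
  then have near: "v - d \<in> {p<..<q}" "v + d \<in> {p<..<q}" "\<bar>(v - d) - v\<bar> < e" "\<bar>(v + d) - v\<bar> < e"
    and "v - d < v" "v < v + d"
    using v by auto
  then have "g (v - d) < g v \<and> g v < g (v + d) \<or> g (v + d) < g v \<and> g v < g (v - d)"
    using mono v by (auto simp: monotone_on_def)
  moreover have "g (v - d) \<le> g v \<and> g (v + d) \<le> g v \<or> g v \<le> g (v - d) \<and> g v \<le> g (v + d)"
    using extremum near(3,4) by blast
  ultimately show False by auto
qed

lemma strict_mono_on_interval_bounds:
  fixes g :: "real \<Rightarrow> real"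
  assumes cont: "continuous_on {p..q} g" and mono: "strict_mono_on {p<..<q} g" and v: "v \<in> {p<..<q}"
  shows "g p < g v \<and> g v < g q"
proof -
  have lower: "g p \<le> g w" if w: "w \<in> {p<..<q}" for w
  proof (rule continuous_le_on_closure[of "{p<..<w}" g p "g w"])
    show "continuous_on (closure {p<..<w}) g" using w by (auto intro: continuous_on_subset[OF cont])
    show "g x \<le> g w" if "x \<in> {p<..<w}" for x using that w by (auto intro: strict_mono_on_leD[OF mono])
  qed (use w in auto)
  have upper: "g w \<le> g q" if w: "w \<in> {p<..<q}" for w
  proof (rule continuous_ge_on_closure[of "{w<..<q}" g q "g w"])
    show "continuous_on (closure {w<..<q}) g" using w by (auto intro: continuous_on_subset[OF cont])
    show "g w \<le> g x" if "x \<in> {w<..<q}" for x using that w by (auto intro: strict_mono_on_leD[OF mono])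
  qed (use w in auto)
  have mid: "(p + v) / 2 \<in> {p<..<q}" "(v + q) / 2 \<in> {p<..<q}" using v by auto
  moreover have "g ((p + v) / 2) < g v" "g v < g ((v + q) / 2)"
    using v mid by (auto intro!: strict_mono_onD[OF mono])
  ultimately show ?thesis using lower upper by fastforce
qed

lemma isCont_transform_within_open:
  "isCont f a \<Longrightarrow> open S \<Longrightarrow> a \<in> S \<Longrightarrow> (\<And>x. x \<in> S \<Longrightarrow> f x = h x) \<Longrightarrow> isCont h a"
  using isCont_cong[of f h a] eventually_nhds_in_open[of S a] by (metis (mono_tags) eventually_mono)

locale monotone_piece =
  fixes g g' :: "real \<Rightarrow> real" and p q :: real
  assumes less: "p < q"
    and continuous: "continuous_on {p..q} g"
    and strict_mono_or_antimono: "strict_mono_on {p<..<q} g \<or> strict_antimono_on {p<..<q} g"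
    and has_derivative: "\<And>v. v \<in> {p<..<q} \<Longrightarrow> (g has_real_derivative g' v) (at v)"
    and derivative_nonzero: "\<And>v. v \<in> {p<..<q} \<Longrightarrow> g' v \<noteq> 0"
    and derivative_continuous: "\<And>v. v \<in> {p<..<q} \<Longrightarrow> isCont g' v"
begin

definition increasing :: bool where
  "increasing \<longleftrightarrow> strict_mono_on {p<..<q} g"

definition lo :: real where
  "lo = min (g p) (g q)"

definition hi :: real where
  "hi = max (g p) (g q)"

definition ginv :: "real \<Rightarrow> real" where
  "ginv = the_inv_into {p<..<q} g"

definition piece_cdf :: "real \<Rightarrow> real" where
  "piece_cdf y = measure lborel {v \<in> {p<..<q}. g v \<le> y}"

definition piece_density :: "real \<Rightarrow> real" where
  "piece_density y = (if y \<in> {lo<..<hi} then (if increasing then 1 else -1) / g' (ginv y) else 0)"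

lemma strict_mono_on_uminus: "\<not> increasing \<Longrightarrow> strict_mono_on {p<..<q} (\<lambda>v. - g v)"
  using strict_mono_or_antimono by (auto simp: increasing_def monotone_on_def)

lemma g_le_g_iff:
  assumes "v \<in> {p<..<q}" "w \<in> {p<..<q}"
  shows "g v \<le> g w \<longleftrightarrow> (if increasing then v \<le> w else w \<le> v)"
  using strict_mono_on_less_eq[of _ g v w] strict_mono_on_less_eq[OF strict_mono_on_uminus, of w v] assms
  by (auto simp: increasing_def)

lemma inj_on_g: "inj_on g {p<..<q}"
  by (rule inj_onI) (metis g_le_g_iff order_antisym order_refl)

lemma g_bounds:
  assumes "v \<in> {p<..<q}"
  shows "lo < g v" "g v < hi"
proof -
  have "g p < g v \<and> g v < g q \<or> - g p < - g v \<and> - g v < - g q"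
    using strict_mono_on_interval_bounds[OF continuous _ assms]
      strict_mono_on_interval_bounds[OF continuous_on_minus[OF continuous] strict_mono_on_uminus assms]
    by (cases increasing) (auto simp: increasing_def)
  then show "lo < g v" "g v < hi" by (auto simp: lo_def hi_def)
qed

lemma image_g: "g ` {p<..<q} = {lo<..<hi}"
proof
  show "g ` {p<..<q} \<subseteq> {lo<..<hi}" using g_bounds by auto
  show "{lo<..<hi} \<subseteq> g ` {p<..<q}"
  proof
    fix y assume y: "y \<in> {lo<..<hi}"
    have "\<exists>x. p \<le> x \<and> x \<le> q \<and> g x = y"
      using y less IVT'[of g p y q] IVT2'[of g q y p] continuous
      by (cases "g p \<le> g q") (auto simp: lo_def hi_def)
    then obtain x where "x \<in> {p..q}" "g x = y" by auto
    moreover have "x \<noteq> p" "x \<noteq> q" using y \<open>g x = y\<close> by (auto simp: lo_def hi_def)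
    ultimately show "y \<in> g ` {p<..<q}" by auto
  qed
qed

lemma ginv_in: "y \<in> {lo<..<hi} \<Longrightarrow> ginv y \<in> {p<..<q}"
  unfolding ginv_def using the_inv_into_into[OF inj_on_g] image_g by blast

lemma g_ginv: "y \<in> {lo<..<hi} \<Longrightarrow> g (ginv y) = y"
  unfolding ginv_def using f_the_inv_into_f[OF inj_on_g] image_g by blast

lemma ginv_g: "v \<in> {p<..<q} \<Longrightarrow> ginv (g v) = v"
  unfolding ginv_def by (rule the_inv_into_f_f[OF inj_on_g])

lemma piece_cdf_inside:
  assumes y: "y \<in> {lo<..<hi}"
  shows "piece_cdf y = (if increasing then ginv y - p else q - ginv y)"
proof -
  have "{v \<in> {p<..<q}. g v \<le> y} = (if increasing then {p<..ginv y} else {ginv y..<q})"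
    using g_le_g_iff[of _ "ginv y"] ginv_in[OF y] g_ginv[OF y] by auto
  then show ?thesis using ginv_in[OF y] by (simp add: piece_cdf_def)
qed

lemma piece_cdf_below: "y \<le> lo \<Longrightarrow> piece_cdf y = 0"
proof -
  assume "y \<le> lo"
  then have empty: "{v \<in> {p<..<q}. g v \<le> y} = {}" using g_bounds(1) by force
  show ?thesis unfolding piece_cdf_def empty by simp
qed

lemma piece_cdf_above: "hi \<le> y \<Longrightarrow> piece_cdf y = q - p"
proof -
  assume "hi \<le> y"
  then have full: "{v \<in> {p<..<q}. g v \<le> y} = {p<..<q}" using g_bounds(2) by force
  show ?thesis unfolding piece_cdf_def full using less by simp
qed

lemma isCont_ginv:
  assumes y: "y \<in> {lo<..<hi}"
  shows "isCont ginv y"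
proof -
  define x where "x = ginv y"
  have x: "x \<in> {p<..<q}" "g x = y" using ginv_in[OF y] g_ginv[OF y] by (auto simp: x_def)
  define d where "d = min (x - p) (q - x) / 2"
  have "d > 0" "d < x - p" "d < q - x" using x by (auto simp: d_def)
  have near: "z \<in> {p<..<q}" if "\<bar>z - x\<bar> \<le> d" for z
    using that \<open>d < x - p\<close> \<open>d < q - x\<close> by (auto simp: abs_le_iff)
  have "isCont ginv (g x)"
    by (rule isCont_inverse_function[OF \<open>d > 0\<close>])
      (auto intro: ginv_g near DERIV_isCont[OF has_derivative])
  then show ?thesis using x by simp
qed

lemma ginv_has_derivative:
  assumes y: "y \<in> {lo<..<hi}"
  shows "(ginv has_real_derivative inverse (g' (ginv y))) (at y)"
proof (rule DERIV_inverse_function[where a = lo and b = hi])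
  show "(g has_real_derivative g' (ginv y)) (at (ginv y))" by (rule has_derivative[OF ginv_in[OF y]])
  show "g' (ginv y) \<noteq> 0" by (rule derivative_nonzero[OF ginv_in[OF y]])
  show "g (ginv z) = z" if "lo < z" "z < hi" for z using that by (simp add: g_ginv)
  show "isCont ginv y" by (rule isCont_ginv[OF y])
qed (use y in auto)

lemma piece_cdf_has_derivative:
  assumes "y \<noteq> lo" "y \<noteq> hi"
  shows "(piece_cdf has_real_derivative piece_density y) (at y)"
proof -
  consider "y \<in> {lo<..<hi}" | "y \<in> {..<lo}" | "y \<in> {hi<..}" using assms by fastforce
  then show ?thesis
  proof cases
    case 1
    have "((\<lambda>y. if increasing then ginv y - p else q - ginv y) has_real_derivative piece_density y) (at y)"
      using ginv_has_derivative[OF 1] 1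
      by (cases increasing) (auto simp: piece_density_def divide_inverse intro!: derivative_eq_intros)
    then show ?thesis
    proof (rule has_field_derivative_transform_within_open[where S = "{lo<..<hi}"])
      show "(if increasing then ginv z - p else q - ginv z) = piece_cdf z" if "z \<in> {lo<..<hi}" for z
        using piece_cdf_inside[OF that] by simp
    qed (use 1 in simp_all)
  next
    case 2
    show ?thesis
      by (rule has_field_derivative_transform_within_open[where f = "\<lambda>_. 0" and S = "{..<lo}"])
        (use 2 in \<open>auto simp: piece_cdf_below piece_density_def\<close>)
  next
    case 3
    show ?thesis
      by (rule has_field_derivative_transform_within_open[where f = "\<lambda>_. q - p" and S = "{hi<..}"])
        (use 3 in \<open>auto simp: piece_cdf_above piece_density_def\<close>)
  qed
qed

lemma isCont_piece_density:
  assumes "y \<noteq> lo" "y \<noteq> hi"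
  shows "isCont piece_density y"
proof -
  consider "y \<in> {lo<..<hi}" | "y \<in> {..<lo} \<union> {hi<..}" using assms by fastforce
  then show ?thesis
  proof cases
    case 1
    have "isCont (\<lambda>y. (if increasing then 1 else -1) / g' (ginv y)) y"
      using 1 ginv_in[OF 1] derivative_nonzero
      by (intro continuous_intros isCont_o2[OF isCont_ginv derivative_continuous]) auto
    then show ?thesis
      by (rule isCont_transform_within_open[where S = "{lo<..<hi}"]) (use 1 in \<open>auto simp: piece_density_def\<close>)
  next
    case 2
    show ?thesis
      by (rule isCont_transform_within_open[where f = "\<lambda>_. 0" and h = piece_density and S = "{..<lo} \<union> {hi<..}"])
        (use 2 in \<open>auto simp: piece_density_def\<close>)
  qed
qed

end

section \<open>Piecewise monotone functions\<close>

locale piecewise_monotone =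
  fixes g g' :: "real \<Rightarrow> real" and u :: "nat \<Rightarrow> real" and M :: nat
  assumes partition: "partition01 u M"
    and continuous: "continuous_on {0..1} g"
    and piece: "\<And>m. m \<in> {1..M} \<Longrightarrow> monotone_piece g g' (u (m - 1)) (u m)"
begin

definition density :: "real \<Rightarrow> real" where
  "density y = (\<Sum>m\<in>{1..M}. monotone_piece.piece_density g g' (u (m - 1)) (u m) y)"

lemma finite_preimage:
  assumes "finite W"
  shows "finite {v \<in> {0..1}. g v \<in> W}"
proof -
  have "{v \<in> {0..1}. g v \<in> W} \<subseteq> u ` {0..M} \<union> (\<Union>m\<in>{1..M}. {v \<in> {u (m - 1)<..<u m}. g v \<in> W})"
  proof
    fix v assume "v \<in> {v \<in> {0..1}. g v \<in> W}"
    then show "v \<in> u ` {0..M} \<union> (\<Union>m\<in>{1..M}. {v \<in> {u (m - 1)<..<u m}. g v \<in> W})"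
      using partition01_cover[OF partition, of v] by auto
  qed
  moreover have "finite {v \<in> {u (m - 1)<..<u m}. g v \<in> W}" if "m \<in> {1..M}" for m
  proof (rule inj_on_finite[of g _ W])
    show "inj_on g {v \<in> {u (m - 1)<..<u m}. g v \<in> W}"
      by (rule inj_on_subset[OF monotone_piece.inj_on_g[OF piece[OF that]]]) auto
  qed (use \<open>finite W\<close> in auto)
  ultimately show ?thesis by (auto intro: finite_subset)
qed

lemma distfun_eq_sum: "distfun g y = (\<Sum>m\<in>{1..M}. monotone_piece.piece_cdf g (u (m - 1)) (u m) y)"
proof -
  define S where "S = {v \<in> {0..1}. g v \<le> y}"
  have "closed S"
    using continuous_closed_preimage[OF continuous closed_atLeastAtMost closed_atMost, of y]
    by (simp add: S_def vimage_def Int_def)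
  then have "S \<in> sets lborel" by simp
  have "distfun g y = measure lborel S"
    unfolding distfun_def S_def by (simp add: measure_unif01 subset_eq)
  also have "\<dots> = (\<Sum>m\<in>{1..M}. measure lborel (S \<inter> {u (m - 1)<..<u m}))"
    using \<open>S \<in> sets lborel\<close> by (intro measure_partition01[OF partition]) (auto simp: S_def)
  also have "\<dots> = (\<Sum>m\<in>{1..M}. monotone_piece.piece_cdf g (u (m - 1)) (u m) y)"
  proof (rule sum.cong)
    fix m assume m: "m \<in> {1..M}"
    then have "S \<inter> {u (m - 1)<..<u m} = {v \<in> {u (m - 1)<..<u m}. g v \<le> y}"
      using partition01_cell_bounds[OF partition m] by (auto simp: S_def)
    then show "measure lborel (S \<inter> {u (m - 1)<..<u m}) = monotone_piece.piece_cdf g (u (m - 1)) (u m) y"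
      by (simp only: monotone_piece.piece_cdf_def[OF piece[OF m]])
  qed simp
  finally show ?thesis .
qed

lemma off_piece_ends:
  assumes "y \<notin> g ` u ` {0..M}" "m \<in> {1..M}"
  shows "y \<noteq> monotone_piece.lo g (u (m - 1)) (u m)" "y \<noteq> monotone_piece.hi g (u (m - 1)) (u m)"
proof -
  have "m - 1 \<in> {0..M}" "m \<in> {0..M}" using assms(2) by auto
  then have "y \<noteq> g (u (m - 1))" "y \<noteq> g (u m)" using assms(1) by auto
  then show "y \<noteq> monotone_piece.lo g (u (m - 1)) (u m)" "y \<noteq> monotone_piece.hi g (u (m - 1)) (u m)"
    unfolding monotone_piece.lo_def[OF piece[OF assms(2)]] monotone_piece.hi_def[OF piece[OF assms(2)]]
    by (auto simp: min_def max_def)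
qed

lemma distfun_has_derivative:
  assumes "y \<notin> g ` u ` {0..M}"
  shows "(distfun g has_real_derivative density y) (at y)"
proof -
  have "((\<lambda>y. \<Sum>m\<in>{1..M}. monotone_piece.piece_cdf g (u (m - 1)) (u m) y) has_real_derivative density y) (at y)"
    unfolding density_def
    using monotone_piece.piece_cdf_has_derivative[OF piece off_piece_ends[OF assms]]
    by (intro DERIV_sum) auto
  moreover have "distfun g = (\<lambda>y. \<Sum>m\<in>{1..M}. monotone_piece.piece_cdf g (u (m - 1)) (u m) y)"
    by (rule ext) (rule distfun_eq_sum)
  ultimately show ?thesis by (simp only:)
qed

lemma isCont_density:
  assumes "y \<notin> g ` u ` {0..M}"
  shows "isCont density y"
proof -
  have "isCont (\<lambda>y. \<Sum>m\<in>{1..M}. monotone_piece.piece_density g g' (u (m - 1)) (u m) y) y"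
    using monotone_piece.isCont_piece_density[OF piece off_piece_ends[OF assms]]
    by (intro isCont_sum) auto
  then show ?thesis by (simp add: density_def[abs_def])
qed

lemma udp: "udp (distfun g \<circ> g)"
proof (rule udp_distfun_comp)
  show "g \<in> borel_measurable unif01"
    using continuous by (rule borel_measurable_unif01_continuous)
  show "measure unif01 {v \<in> {0..1}. g v = y} = 0" for y
    using finite_preimage[of "{y}"]
    by (simp add: measure_unif01 subset_eq finite_imp_null_set_lborel measure_eq_0_null_sets)
qed

lemma regular_udp: "regular_udp (distfun g \<circ> g)"
proof -
  define V where "V = g ` u ` {0..M}"
  have "finite {v \<in> {0..1}. g v \<in> V}" by (rule finite_preimage) (simp add: V_def)
  then obtain a L where a: "partition01 a L"
    and avoid: "\<And>l. l \<in> {1..L} \<Longrightarrow> {a (l - 1)<..<a l} \<inter> {v \<in> {0..1}. g v \<in> V} = {}"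
    by (rule partition01_avoiding) blast
  have "\<exists>T'. (\<forall>v\<in>{a (l - 1)<..<a l}. ((distfun g \<circ> g) has_real_derivative T' v) (at v)) \<and>
      continuous_on {a (l - 1)<..<a l} T'" if l: "l \<in> {1..L}" for l
  proof (intro exI conjI ballI continuous_at_imp_continuous_on)
    fix v assume v: "v \<in> {a (l - 1)<..<a l}"
    then have "v \<in> {0..1}" and gv: "g v \<notin> V"
      using partition01_cell_bounds[OF a l] avoid[OF l] by auto
    moreover have "v \<notin> u ` {0..M}" using gv by (auto simp: V_def)
    ultimately obtain m where m: "m \<in> {1..M}" "v \<in> {u (m - 1)<..<u m}"
      using partition01_cover[OF partition] by blast
    have g: "(g has_real_derivative g' v) (at v)" "isCont g' v"
      using monotone_piece.has_derivative[OF piece[OF m(1)] m(2)]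
        monotone_piece.derivative_continuous[OF piece[OF m(1)] m(2)] by auto
    have gv': "g v \<notin> g ` u ` {0..M}" using gv by (simp add: V_def)
    show "((distfun g \<circ> g) has_real_derivative density (g v) * g' v) (at v)"
      by (rule DERIV_chain[OF distfun_has_derivative[OF gv'] g(1)])
    have "isCont (\<lambda>v. density (g v)) v"
      by (rule isCont_o2[OF DERIV_isCont[OF g(1)] isCont_density[OF gv']])
    then show "isCont (\<lambda>v. density (g v) * g' v) v" using g(2) by (rule isCont_mult)
  qed
  then show ?thesis using udp a unfolding regular_udp_def partition01_def by blast
qed

end

lemma piecewise_monotone_if_regular:
  assumes "pw_cont_strict_mono g" "regular_fun g"
  obtains g' u M where "piecewise_monotone g g' u M"
proof -
  obtain u M where u: "partition01 u M"
    and mono: "\<And>m. m \<in> {1..M} \<Longrightarrow>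
      strict_mono_on {u (m - 1)<..<u m} g \<or> strict_antimono_on {u (m - 1)<..<u m} g"
    using assms(1) unfolding pw_cont_strict_mono_def partition01_def monotone_on_def by blast
  obtain g' where cont: "continuous_on {0..1} g"
    and der: "\<And>v. v \<in> {0<..<1} \<Longrightarrow> (g has_real_derivative g' v) (at v)"
    and g'_cont: "continuous_on {0<..<1} g'"
    and turning: "\<And>v. v \<in> {0<..<1} \<Longrightarrow> g' v = 0 \<longleftrightarrow> turning_point g v"
    using assms(2) unfolding regular_fun_def by blast
  have "monotone_piece g g' (u (m - 1)) (u m)" if m: "m \<in> {1..M}" for m
  proof
    note bounds = partition01_cell_bounds[OF u m]
    show "u (m - 1) < u m" by (fact bounds(2))
    show "continuous_on {u (m - 1)..u m} g"
      using bounds by (intro continuous_on_subset[OF cont]) auto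
    show "strict_mono_on {u (m - 1)<..<u m} g \<or> strict_antimono_on {u (m - 1)<..<u m} g"
      by (rule mono[OF m])
    fix v assume v: "v \<in> {u (m - 1)<..<u m}"
    then have "v \<in> {0<..<1}" using bounds by auto
    then show "(g has_real_derivative g' v) (at v)" "isCont g' v" "g' v \<noteq> 0"
      using der g'_cont turning strict_mono_on_not_turning_point[OF mono[OF m] v]
      by (simp_all add: continuous_on_eq_continuous_at)
  qed
  then have "piecewise_monotone g g' u M" using u cont by (simp add: piecewise_monotone_def)
  then show thesis by (rule that)
qed

theorem proposition7:
  fixes g h :: "real \<Rightarrow> real"
  assumes "pw_cont_strict_mono g" "regular_fun g"
      and "pw_cont_strict_mono h" "regular_fun h"
  shows "regular_udp (distfun g \<circ> g) \<and> regular_udp (distfun h \<circ> h)"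
proof -
  have "regular_udp (distfun f \<circ> f)" if "pw_cont_strict_mono f" "regular_fun f" for f
    using piecewise_monotone_if_regular[OF that] piecewise_monotone.regular_udp by metis
  then show ?thesis using assms by blast
qed

end
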